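(* Let $I\subseteq\mathbb{R}$ be an interval, let $f:I\to\mathbb{R}$ be differentiable on the interior $I^{\circ}$, let $a,b\in I^{\circ}$ with $a<b$, assume $f'\in L[a,b]$, and let $\alpha,\lambda\in[0,1]$. Suppose that $|f'|$ is $s$-convex on $[a,b]$ for some fixed $s\in(0,1]$. Define $$I_f(\lambda,\alpha,a,b)=\lambda\big(\alpha f(a)+(1-\alpha)f(b)\big)+(1-\lambda)f(\alpha a+(1-\alpha)b)-\frac{1}{b-a}\int_a^b f(x)\,dx,$$ $$c_1(\alpha,\lambda,s)=(\alpha\lambda)^{s+2}\frac{2}{(s+1)(s+2)}-\alpha\lambda\frac{(1-\alpha)^{s+1}}{s+1}+\frac{(1-\alpha)^{s+2}}{s+2},$$ $$c_2(\alpha,\lambda,s)=(1-\alpha\lambda)^{s+2}\frac{2}{(s+1)(s+2)}-\frac{(1-\alpha\lambda)(1+\alpha^{s+1})}{s+1}+\frac{1+\alpha^{s+2}}{s+2},$$ $$c_3(\alpha,\lambda,s)=\alpha\lambda\frac{(1-\alpha)^{s+1}}{s+1}-\frac{(1-\alpha)^{s+2}}{s+2},\qquad c_4(\alpha,\lambda,s)=\frac{(\alpha\lambda-1)(1-\alpha^{s+1})}{s+1}+\frac{1-\alpha^{s+2}}{s+2}.$$ Then: (i) if $\alpha\lambda\leq 1-\alpha\leq 1-\lambda(1-\alpha)$, $$|I_f(\lambda,\alpha,a,b)|\leq (b-a)\Big[\big(c_1(\alpha,\lambda,s)+c_2(1-\alpha,\lambda,s)\big)|f'(b)|+\big(c_2(\alpha,\lambda,s)+c_1(1-\alpha,\lambda,s)\big)|f'(a)|\Big];$$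 (ii) if $\alpha\lambda\leq 1-\lambda(1-\alpha)\leq 1-\alpha$, $$|I_f(\lambda,\alpha,a,b)|\leq (b-a)\Big[\big(c_1(\alpha,\lambda,s)+c_4(1-\alpha,\lambda,s)\big)|f'(b)|+\big(c_2(\alpha,\lambda,s)+c_3(1-\alpha,\lambda,s)\big)|f'(a)|\Big];$$ (iii) if $1-\alpha\leq\alpha\lambda\leq 1-\lambda(1-\alpha)$, $$|I_f(\lambda,\alpha,a,b)|\leq (b-a)\Big[\big(c_3(\alpha,\lambda,s)+c_2(1-\alpha,\lambda,s)\big)|f'(b)|+\big(c_4(\alpha,\lambda,s)+c_1(1-\alpha,\lambda,s)\big)|f'(a)|\Big].$$
   Context: For a fixed $s\in(0,1]$, a function $g:[a,b]\to[0,\infty)$ is called $s$-convex (in the second sense) on $[a,b]$ if $g(\theta x+(1-\theta)y)\leq \theta^{s}g(x)+(1-\theta)^{s}g(y)$ for all $x,y\in[a,b]$ and all $\theta\in[0,1]$. *)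

theory Defs
  imports "HOL-Analysis.Analysis"
begin

definition s_convex_on :: "real \<Rightarrow> real \<Rightarrow> real \<Rightarrow> (real \<Rightarrow> real) \<Rightarrow> bool" where
  "s_convex_on s a b g \<longleftrightarrow>
     (\<forall>x\<in>{a..b}. g x \<ge> 0) \<and>
     (\<forall>x\<in>{a..b}. \<forall>y\<in>{a..b}. \<forall>\<theta>\<in>{0..1}.
        g (\<theta> * x + (1 - \<theta>) * y) \<le> \<theta> powr s * g x + (1 - \<theta>) powr s * g y)"

definition If_fun :: "(real \<Rightarrow> real) \<Rightarrow> real \<Rightarrow> real \<Rightarrow> real \<Rightarrow> real \<Rightarrow> real" where
  "If_fun f lam \<alpha> a b =
     lam * (\<alpha> * f a + (1 - \<alpha>) * f b) + (1 - lam) * f (\<alpha> * a + (1 - \<alpha>) * b)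
     - (1 / (b - a)) * integral {a..b} f"

definition c1 :: "real \<Rightarrow> real \<Rightarrow> real \<Rightarrow> real" where
  "c1 \<alpha> lam s = (\<alpha> * lam) powr (s + 2) * (2 / ((s + 1) * (s + 2)))
      - \<alpha> * lam * ((1 - \<alpha>) powr (s + 1) / (s + 1)) + (1 - \<alpha>) powr (s + 2) / (s + 2)"

definition c2 :: "real \<Rightarrow> real \<Rightarrow> real \<Rightarrow> real" where
  "c2 \<alpha> lam s = (1 - \<alpha> * lam) powr (s + 2) * (2 / ((s + 1) * (s + 2)))
      - (1 - \<alpha> * lam) * (1 + \<alpha> powr (s + 1)) / (s + 1) + (1 + \<alpha> powr (s + 2)) / (s + 2)"

definition c3 :: "real \<Rightarrow> real \<Rightarrow> real \<Rightarrow> real" where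
  "c3 \<alpha> lam s = \<alpha> * lam * ((1 - \<alpha>) powr (s + 1) / (s + 1)) - (1 - \<alpha>) powr (s + 2) / (s + 2)"

definition c4 :: "real \<Rightarrow> real \<Rightarrow> real \<Rightarrow> real" where
  "c4 \<alpha> lam s = (\<alpha> * lam - 1) * (1 - \<alpha> powr (s + 1)) / (s + 1) + (1 - \<alpha> powr (s + 2)) / (s + 2)"

end

theory Submission
  imports Defs
begin

text \<open>
  Rescaling \<open>[a, b]\<close> to \<open>[0, 1]\<close> via \<open>g t = f (a + t (b - a))\<close> and integrating by parts on
  \<open>[0, 1 - \<alpha>]\<close> and \<open>[1 - \<alpha>, 1]\<close> writes \<open>I\<^sub>f\<close> as \<open>\<integral>\<^sub>0\<^sup>1 K(t) g'(t) dt\<close> with the Peano kernel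
  \<open>K(t) = t - \<alpha>\<lambda>\<close> on the first piece and \<open>K(t) = t - (1 - \<lambda>(1 - \<alpha>))\<close> on the second.
  By \<open>s\<close>-convexity \<open>|g'(t)| \<le> (b - a)(t\<^sup>s |f'(b)| + (1 - t)\<^sup>s |f'(a)|)\<close>, so \<open>|I\<^sub>f|\<close> is bounded by
  weighted moments \<open>\<integral> |t - p| t\<^sup>s dt\<close>; the substitution \<open>t \<mapsto> 1 - t\<close> turns the \<open>(1 - t)\<^sup>s\<close>
  moments into such moments too. Computed with the primitive of \<open>(t - p) t\<^sup>s\<close>, these moments
  are exactly \<open>c\<^sub>1, \<dots>, c\<^sub>4\<close>; which of them occur depends on whether each zero of the kernel lies
  inside its piece, and the three cases of the theorem are the possible positions of the two zeros.
\<close>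

definition moment_primitive :: "real \<Rightarrow> real \<Rightarrow> real \<Rightarrow> real" where
  "moment_primitive s p t = t powr (s + 2) / (s + 2) - p * t powr (s + 1) / (s + 1)"

lemma moment_primitive_has_real_derivative:
  assumes "-1 < s" and "0 < t"
  shows "(moment_primitive s p has_real_derivative (t - p) * t powr s) (at t)"
proof -
  have "(moment_primitive s p has_real_derivative t powr (s + 1) - p * t powr s) (at t)"
    unfolding moment_primitive_def using assms
    by (auto intro!: derivative_eq_intros simp: add.commute)
  moreover have "t powr (s + 1) - p * t powr s = (t - p) * t powr s"
    using assms(2) by (simp add: powr_add left_diff_distrib)
  ultimately show ?thesis by simp
qed

lemma moment_has_integral:
  assumes "-1 < s" and "0 \<le> x" and "x \<le> y"
  shows "((\<lambda>t. (t - p) * t powr s) has_integral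
           moment_primitive s p y - moment_primitive s p x) {x..y}"
proof (rule fundamental_theorem_of_calculus_interior[OF assms(3)])
  show "continuous_on {x..y} (moment_primitive s p)"
    unfolding moment_primitive_def using assms
    by (intro continuous_intros continuous_on_powr') auto
next
  fix t assume "t \<in> {x<..<y}"
  then show "(moment_primitive s p has_vector_derivative (t - p) * t powr s) (at t)"
    using assms moment_primitive_has_real_derivative
    by (simp add: has_real_derivative_iff_has_vector_derivative[symmetric])
qed

lemma has_integral_reflect_one_minus:
  fixes g :: "real \<Rightarrow> 'a::real_normed_vector"
  assumes "(g has_integral i) {1 - y..1 - x}"
  shows "((\<lambda>t. g (1 - t)) has_integral i) {x..y}"
proof -
  have "(g has_integral i) (cbox (1 - y) (1 - x))"
    using assms by simp
  from has_integral_affinity[OF this, of "-1" 1] show ?thesis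
    by (simp add: image_affinity_atLeastAtMost)
qed

lemma abs_moment_has_integral_above:
  assumes "-1 < s" and "0 \<le> x" and "x \<le> y" and "p \<le> x"
  shows "((\<lambda>t. \<bar>t - p\<bar> * t powr s) has_integral
           moment_primitive s p y - moment_primitive s p x) {x..y}"
  by (rule has_integral_eq[OF _ moment_has_integral[OF assms(1-3)]]) (use assms in auto)

lemma abs_moment_has_integral_below:
  assumes "-1 < s" and "0 \<le> x" and "x \<le> y" and "y \<le> p"
  shows "((\<lambda>t. \<bar>t - p\<bar> * t powr s) has_integral
           moment_primitive s p x - moment_primitive s p y) {x..y}"
proof -
  have "((\<lambda>t. \<bar>t - p\<bar> * t powr s) has_integral
          - (moment_primitive s p y - moment_primitive s p x)) {x..y}"
    by (rule has_integral_eq[OF _ has_integral_neg[OF moment_has_integral[OF assms(1-3)]]])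
      (use assms in \<open>auto simp: left_diff_distrib\<close>)
  then show ?thesis by simp
qed

lemma abs_moment_has_integral_split:
  assumes "-1 < s" and "0 \<le> x" and "x \<le> p" and "p \<le> y"
  shows "((\<lambda>t. \<bar>t - p\<bar> * t powr s) has_integral
           moment_primitive s p x + moment_primitive s p y - 2 * moment_primitive s p p) {x..y}"
proof -
  have "((\<lambda>t. \<bar>t - p\<bar> * t powr s) has_integral
          (moment_primitive s p x - moment_primitive s p p)
          + (moment_primitive s p y - moment_primitive s p p)) {x..y}"
    using assms
    by (intro has_integral_combine[OF assms(3,4)] abs_moment_has_integral_below
          abs_moment_has_integral_above) auto
  then show ?thesis by (simp add: algebra_simps)
qed

lemma moment_primitive_self:
  assumes "0 \<le> p"
  shows "moment_primitive s p p = p powr (s + 2) / (s + 2) - p powr (s + 2) / (s + 1)"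
proof -
  have "p * p powr (s + 1) = p powr (s + 2)"
    using assms by (simp add: powr_add power2_eq_square)
  then show ?thesis
    by (simp add: moment_primitive_def)
qed

lemma two_div_partial_fractions:
  fixes s :: real
  assumes "-1 < s"
  shows "2 / ((s + 1) * (s + 2)) = 2 / (s + 1) - 2 / (s + 2)"
  using assms by (simp add: field_simps)

lemma c1_has_integral:
  assumes "-1 < s" and "0 \<le> \<alpha> * lam" and "\<alpha> * lam \<le> 1 - \<alpha>"
  shows "((\<lambda>t. \<bar>t - \<alpha> * lam\<bar> * t powr s) has_integral c1 \<alpha> lam s) {0..1 - \<alpha>}"
proof -
  let ?P = "moment_primitive s (\<alpha> * lam)"
  have "c1 \<alpha> lam s = ?P 0 + ?P (1 - \<alpha>) - 2 * ?P (\<alpha> * lam)"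
    unfolding c1_def two_div_partial_fractions[OF assms(1)]
      moment_primitive_self[OF assms(2)]
    by (simp add: moment_primitive_def divide_inverse algebra_simps)
  then show ?thesis
    using abs_moment_has_integral_split[OF assms(1) order_refl assms(2,3)] by simp
qed

lemma c2_has_integral:
  assumes "-1 < s" and "0 \<le> \<alpha>" and "\<alpha> \<le> 1 - \<alpha> * lam" and "0 \<le> \<alpha> * lam"
  shows "((\<lambda>t. \<bar>t - (1 - \<alpha> * lam)\<bar> * t powr s) has_integral c2 \<alpha> lam s) {\<alpha>..1}"
proof -
  let ?P = "moment_primitive s (1 - \<alpha> * lam)"
  have r: "0 \<le> 1 - \<alpha> * lam"
    using assms(2,3) by linarith
  have "c2 \<alpha> lam s = ?P \<alpha> + ?P 1 - 2 * ?P (1 - \<alpha> * lam)"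
    unfolding c2_def two_div_partial_fractions[OF assms(1)] moment_primitive_self[OF r]
    by (simp add: moment_primitive_def divide_inverse algebra_simps)
  then show ?thesis
    using abs_moment_has_integral_split[OF assms(1-3), of 1] assms(4) by simp
qed

lemma c3_has_integral:
  assumes "-1 < s" and "\<alpha> \<le> 1" and "1 - \<alpha> \<le> \<alpha> * lam"
  shows "((\<lambda>t. \<bar>t - \<alpha> * lam\<bar> * t powr s) has_integral c3 \<alpha> lam s) {0..1 - \<alpha>}"
proof -
  let ?P = "moment_primitive s (\<alpha> * lam)"
  have "c3 \<alpha> lam s = ?P 0 - ?P (1 - \<alpha>)"
    by (simp add: c3_def moment_primitive_def)
  then show ?thesis
    using abs_moment_has_integral_below[OF assms(1) order_refl _ assms(3)] assms(2) by simp
qed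

lemma c4_has_integral:
  assumes "-1 < s" and "0 \<le> \<alpha>" and "\<alpha> \<le> 1" and "1 - \<alpha> * lam \<le> \<alpha>"
  shows "((\<lambda>t. \<bar>t - (1 - \<alpha> * lam)\<bar> * t powr s) has_integral c4 \<alpha> lam s) {\<alpha>..1}"
proof -
  let ?P = "moment_primitive s (1 - \<alpha> * lam)"
  have "c4 \<alpha> lam s = ?P 1 - ?P \<alpha>"
    by (simp add: c4_def moment_primitive_def divide_inverse algebra_simps)
  then show ?thesis
    using abs_moment_has_integral_above[OF assms] by simp
qed

lemma abs_kernel_has_integral_reflect:
  fixes w :: "real \<Rightarrow> real"
  assumes "((\<lambda>t. \<bar>t - q\<bar> * w t) has_integral i) {1 - y..1 - x}"
  shows "((\<lambda>t. \<bar>t - (1 - q)\<bar> * w (1 - t)) has_integral i) {x..y}"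
proof -
  have "\<bar>1 - t - q\<bar> = \<bar>t - (1 - q)\<bar>" for t :: real
    by linarith
  then show ?thesis
    using has_integral_reflect_one_minus[OF assms] by simp
qed

lemma has_integral_weighted_sum:
  fixes k u v :: "real \<Rightarrow> real"
  assumes "((\<lambda>t. k t * u t) has_integral i) S" and "((\<lambda>t. k t * v t) has_integral j) S"
  shows "((\<lambda>t. k t * (B * u t + A * v t)) has_integral B * i + A * j) S"
proof -
  have "((\<lambda>t. B * (k t * u t) + A * (k t * v t)) has_integral B * i + A * j) S"
    using assms by (intro has_integral_add has_integral_mult_right)
  then show ?thesis
    by (simp add: algebra_simps)
qed

lemma left_kernel_has_integral_c1_c2:
  assumes "-1 < s" and "\<alpha> \<in> {0..1}" and "lam \<in> {0..1}" and "\<alpha> * lam \<le> 1 - \<alpha>"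
  shows "((\<lambda>t. \<bar>t - \<alpha> * lam\<bar> * (B * t powr s + A * (1 - t) powr s)) has_integral
           B * c1 \<alpha> lam s + A * c2 \<alpha> lam s) {0..1 - \<alpha>}"
proof (rule has_integral_weighted_sum)
  have "0 \<le> \<alpha> * lam"
    using assms(2,3) by simp
  then show "((\<lambda>t. \<bar>t - \<alpha> * lam\<bar> * t powr s) has_integral c1 \<alpha> lam s) {0..1 - \<alpha>}"
    using c1_has_integral assms by blast
  have "((\<lambda>t. \<bar>t - (1 - \<alpha> * lam)\<bar> * t powr s) has_integral c2 \<alpha> lam s) {1 - (1 - \<alpha>)..1 - 0}"
    using c2_has_integral[OF assms(1) _ _ \<open>0 \<le> \<alpha> * lam\<close>] assms by simp
  from abs_kernel_has_integral_reflect[OF this]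
  show "((\<lambda>t. \<bar>t - \<alpha> * lam\<bar> * (1 - t) powr s) has_integral c2 \<alpha> lam s) {0..1 - \<alpha>}"
    by simp
qed

lemma left_kernel_has_integral_c3_c4:
  assumes "-1 < s" and "\<alpha> \<in> {0..1}" and "1 - \<alpha> \<le> \<alpha> * lam"
  shows "((\<lambda>t. \<bar>t - \<alpha> * lam\<bar> * (B * t powr s + A * (1 - t) powr s)) has_integral
           B * c3 \<alpha> lam s + A * c4 \<alpha> lam s) {0..1 - \<alpha>}"
proof (rule has_integral_weighted_sum)
  show "((\<lambda>t. \<bar>t - \<alpha> * lam\<bar> * t powr s) has_integral c3 \<alpha> lam s) {0..1 - \<alpha>}"
    using c3_has_integral assms by auto
  have "((\<lambda>t. \<bar>t - (1 - \<alpha> * lam)\<bar> * t powr s) has_integral c4 \<alpha> lam s) {1 - (1 - \<alpha>)..1 - 0}"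
    using c4_has_integral[OF assms(1)] assms by simp
  from abs_kernel_has_integral_reflect[OF this]
  show "((\<lambda>t. \<bar>t - \<alpha> * lam\<bar> * (1 - t) powr s) has_integral c4 \<alpha> lam s) {0..1 - \<alpha>}"
    by simp
qed

text \<open>The substitution \<open>t \<mapsto> 1 - t\<close> maps the right piece of the kernel onto the left piece for
  \<open>1 - \<alpha>\<close> in place of \<open>\<alpha>\<close>, exchanging the weights of \<open>|f'(a)|\<close> and \<open>|f'(b)|\<close>.\<close>

lemma right_kernel_reflect_left:
  fixes \<alpha> lam :: real
  assumes "((\<lambda>t. \<bar>t - (1 - \<alpha>) * lam\<bar> * (A * t powr s + B * (1 - t) powr s)) has_integral i)
             {0..1 - (1 - \<alpha>)}"
  shows "((\<lambda>t. \<bar>t - (1 - lam * (1 - \<alpha>))\<bar> * (B * t powr s + A * (1 - t) powr s)) has_integral i)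
           {1 - \<alpha>..1}"
proof -
  have "((\<lambda>t. \<bar>t - (1 - \<alpha>) * lam\<bar> * (A * t powr s + B * (1 - t) powr s)) has_integral i)
          {1 - 1..1 - (1 - \<alpha>)}"
    using assms by simp
  from abs_kernel_has_integral_reflect[OF this] show ?thesis
    by (simp add: algebra_simps)
qed

lemma right_kernel_has_integral_c2_c1:
  assumes "-1 < s" and "\<alpha> \<in> {0..1}" and "lam \<in> {0..1}" and "1 - \<alpha> \<le> 1 - lam * (1 - \<alpha>)"
  shows "((\<lambda>t. \<bar>t - (1 - lam * (1 - \<alpha>))\<bar> * (B * t powr s + A * (1 - t) powr s)) has_integral
           B * c2 (1 - \<alpha>) lam s + A * c1 (1 - \<alpha>) lam s) {1 - \<alpha>..1}"
  using left_kernel_has_integral_c1_c2[of s "1 - \<alpha>" lam A B] assms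
  by (intro right_kernel_reflect_left) (simp_all add: algebra_simps)

lemma right_kernel_has_integral_c4_c3:
  assumes "-1 < s" and "\<alpha> \<in> {0..1}" and "1 - lam * (1 - \<alpha>) \<le> 1 - \<alpha>"
  shows "((\<lambda>t. \<bar>t - (1 - lam * (1 - \<alpha>))\<bar> * (B * t powr s + A * (1 - t) powr s)) has_integral
           B * c4 (1 - \<alpha>) lam s + A * c3 (1 - \<alpha>) lam s) {1 - \<alpha>..1}"
  using left_kernel_has_integral_c3_c4[of s "1 - \<alpha>" lam A B] assms
  by (intro right_kernel_reflect_left) (simp_all add: algebra_simps)

lemma has_integral_abs_le_weighted:
  fixes k g w :: "real \<Rightarrow> real"
  assumes "((\<lambda>t. k t * g t) has_integral V) S"
    and "((\<lambda>t. \<bar>k t\<bar> * w t) has_integral W) S"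
    and "\<And>t. t \<in> S \<Longrightarrow> \<bar>g t\<bar> \<le> w t"
  shows "\<bar>V\<bar> \<le> W"
proof -
  have "norm V \<le> W \<bullet> 1"
  proof (rule has_integral_norm_bound_integral_component[OF assms(1,2)])
    fix t assume "t \<in> S"
    then show "norm (k t * g t) \<le> (\<bar>k t\<bar> * w t) \<bullet> 1"
      using assms(3) by (simp add: abs_mult mult_left_mono)
  qed
  then show ?thesis by simp
qed

lemma has_integral_kernel_times_derivative:
  fixes g g' :: "real \<Rightarrow> real"
  assumes "x0 \<le> x1"
    and deriv: "\<And>t. t \<in> {x0..x1} \<Longrightarrow> (g has_real_derivative g' t) (at t within {x0..x1})"
  shows "((\<lambda>t. (t - p) * g' t) has_integral
           (x1 - p) * g x1 - (x0 - p) * g x0 - integral {x0..x1} g) {x0..x1}"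
proof -
  have "continuous_on {x0..x1} g"
    using deriv by (meson DERIV_continuous continuous_on_eq_continuous_within)
  then have int_g: "(g has_integral integral {x0..x1} g) {x0..x1}"
    by (simp add: integrable_continuous_interval integrable_integral)
  have "((\<lambda>t. g t + (t - p) * g' t) has_integral (x1 - p) * g x1 - (x0 - p) * g x0) {x0..x1}"
  proof (rule fundamental_theorem_of_calculus[OF assms(1)])
    fix t assume "t \<in> {x0..x1}"
    then have "((\<lambda>t. (t - p) * g t) has_real_derivative g t + (t - p) * g' t) (at t within {x0..x1})"
      using deriv by (auto intro!: derivative_eq_intros)
    then show "((\<lambda>t. (t - p) * g t) has_vector_derivative g t + (t - p) * g' t) (at t within {x0..x1})"
      by (simp add: has_real_derivative_iff_has_vector_derivative)
  qed
  from has_integral_diff[OF this int_g] show ?thesis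
    by simp
qed

lemma If_fun_unit_interval_abs_le:
  fixes g g' w :: "real \<Rightarrow> real"
  assumes "\<alpha> \<in> {0..1}"
    and deriv: "\<And>t. t \<in> {0..1} \<Longrightarrow> (g has_real_derivative g' t) (at t within {0..1})"
    and bound: "\<And>t. t \<in> {0..1} \<Longrightarrow> \<bar>g' t\<bar> \<le> C * w t"
    and W1: "((\<lambda>t. \<bar>t - \<alpha> * lam\<bar> * w t) has_integral W1) {0..1 - \<alpha>}"
    and W2: "((\<lambda>t. \<bar>t - (1 - lam * (1 - \<alpha>))\<bar> * w t) has_integral W2) {1 - \<alpha>..1}"
  shows "\<bar>If_fun g lam \<alpha> 0 1\<bar> \<le> C * (W1 + W2)"
proof -
  let ?p1 = "\<alpha> * lam" and ?p2 = "1 - lam * (1 - \<alpha>)"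
  define V1 where "V1 = (1 - \<alpha> - ?p1) * g (1 - \<alpha>) - (0 - ?p1) * g 0 - integral {0..1 - \<alpha>} g"
  define V2 where "V2 = (1 - ?p2) * g 1 - (1 - \<alpha> - ?p2) * g (1 - \<alpha>) - integral {1 - \<alpha>..1} g"
  have c: "0 \<le> 1 - \<alpha>" "1 - \<alpha> \<le> 1"
    using assms(1) by auto
  have deriv_sub: "(g has_real_derivative g' t) (at t within {x0..x1})"
    if "0 \<le> x0" "x1 \<le> 1" "t \<in> {x0..x1}" for x0 x1 t
    using deriv[of t] that by (auto intro: DERIV_subset)
  have "((\<lambda>t. (t - ?p1) * g' t) has_integral V1) {0..1 - \<alpha>}"
    unfolding V1_def
    by (rule has_integral_kernel_times_derivative[OF c(1) deriv_sub]) (use c in auto)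
  moreover have "((\<lambda>t. \<bar>t - ?p1\<bar> * (C * w t)) has_integral C * W1) {0..1 - \<alpha>}"
    using has_integral_mult_right[OF W1, of C] by (simp add: mult.left_commute)
  ultimately have V1: "\<bar>V1\<bar> \<le> C * W1"
    by (rule has_integral_abs_le_weighted) (use bound c in auto)
  have "((\<lambda>t. (t - ?p2) * g' t) has_integral V2) {1 - \<alpha>..1}"
    unfolding V2_def
    by (rule has_integral_kernel_times_derivative[OF c(2) deriv_sub]) (use c in auto)
  moreover have "((\<lambda>t. \<bar>t - ?p2\<bar> * (C * w t)) has_integral C * W2) {1 - \<alpha>..1}"
    using has_integral_mult_right[OF W2, of C] by (simp add: mult.left_commute)
  ultimately have V2: "\<bar>V2\<bar> \<le> C * W2"
    by (rule has_integral_abs_le_weighted) (use bound c in auto)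
  have "g integrable_on {0..1}"
    using deriv by (meson DERIV_continuous continuous_on_eq_continuous_within
        integrable_continuous_interval)
  then have "integral {0..1} g = integral {0..1 - \<alpha>} g + integral {1 - \<alpha>..1} g"
    using Henstock_Kurzweil_Integration.integral_combine[OF c] by metis
  then have "If_fun g lam \<alpha> 0 1 = V1 + V2"
    unfolding If_fun_def V1_def V2_def by (simp add: algebra_simps)
  then show ?thesis
    using V1 V2 abs_triangle_ineq[of V1 V2] by (simp add: distrib_left)
qed

lemma affine_param_mem_interval:
  fixes a b t :: real
  assumes "a \<le> b" and "t \<in> {0..1}"
  shows "a + t * (b - a) \<in> {a..b}"
proof -
  have "0 \<le> t * (b - a)" "t * (b - a) \<le> b - a"
    using assms by (simp_all add: mult_left_le_one_le)
  then show ?thesis by simp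
qed

lemma If_fun_rescale_unit_interval:
  assumes "a < b" and "continuous_on {a..b} f"
  shows "If_fun f lam \<alpha> a b = If_fun (\<lambda>t. f (a + t * (b - a))) lam \<alpha> 0 1"
proof -
  have subst: "((\<lambda>t. (b - a) *\<^sub>R f (a + t * (b - a))) has_integral integral {a..b} f) {0..1}"
  proof (rule has_integral_substitution[of 0 1 "\<lambda>t. a + t * (b - a)" a b, simplified])
    show "(\<lambda>t. a + t * (b - a)) ` {0..1} \<subseteq> {a..b}"
      using affine_param_mem_interval assms(1) by auto
  qed (use assms in \<open>auto intro!: derivative_eq_intros\<close>)
  have "(b - a) * integral {0..1} (\<lambda>t. f (a + t * (b - a))) = integral {a..b} f"
    using integral_unique[OF subst] by simp
  then have "integral {0..1} (\<lambda>t. f (a + t * (b - a))) = integral {a..b} f / (b - a)"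
    using assms(1) by (simp add: field_simps)
  moreover have "a + (1 - \<alpha>) * (b - a) = \<alpha> * a + (1 - \<alpha>) * b"
    by (simp add: algebra_simps)
  ultimately show ?thesis
    by (simp add: If_fun_def)
qed

lemma s_convex_on_bound_affine:
  assumes "s_convex_on s a b \<phi>" and "a \<le> b" and "t \<in> {0..1}"
  shows "\<phi> (a + t * (b - a)) \<le> t powr s * \<phi> b + (1 - t) powr s * \<phi> a"
proof -
  have "\<phi> (\<theta> * x + (1 - \<theta>) * y) \<le> \<theta> powr s * \<phi> x + (1 - \<theta>) powr s * \<phi> y"
    if "x \<in> {a..b}" "y \<in> {a..b}" "\<theta> \<in> {0..1}" for x y \<theta>
    using assms(1) that unfolding s_convex_on_def by blast
  moreover have "a + t * (b - a) = t * b + (1 - t) * a"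
    by (simp add: algebra_simps)
  ultimately show ?thesis
    using assms(2,3) by simp
qed

lemma If_fun_abs_le_kernel_integrals:
  fixes f f' :: "real \<Rightarrow> real"
  assumes "a < b"
    and deriv: "\<forall>x\<in>{a..b}. (f has_real_derivative f' x) (at x)"
    and "\<alpha> \<in> {0..1}"
    and "s_convex_on s a b (\<lambda>x. \<bar>f' x\<bar>)"
    and "((\<lambda>t. \<bar>t - \<alpha> * lam\<bar> * (\<bar>f' b\<bar> * t powr s + \<bar>f' a\<bar> * (1 - t) powr s))
           has_integral W1) {0..1 - \<alpha>}"
    and "((\<lambda>t. \<bar>t - (1 - lam * (1 - \<alpha>))\<bar> * (\<bar>f' b\<bar> * t powr s + \<bar>f' a\<bar> * (1 - t) powr s))
           has_integral W2) {1 - \<alpha>..1}"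
  shows "\<bar>If_fun f lam \<alpha> a b\<bar> \<le> (b - a) * (W1 + W2)"
proof -
  define g' where "g' t = (b - a) * f' (a + t * (b - a))" for t
  have "((\<lambda>t. f (a + t * (b - a))) has_real_derivative g' t) (at t within {0..1})"
    if "t \<in> {0..1}" for t
  proof -
    have "(f has_real_derivative f' (a + t * (b - a))) (at (a + t * (b - a)))"
      using deriv affine_param_mem_interval assms(1) that by simp
    moreover have "((\<lambda>t. a + t * (b - a)) has_real_derivative b - a) (at t within {0..1})"
      by (auto intro!: derivative_eq_intros)
    ultimately show ?thesis
      unfolding g'_def by (metis DERIV_chain2 mult.commute)
  qed
  moreover have "\<bar>g' t\<bar> \<le> (b - a) * (\<bar>f' b\<bar> * t powr s + \<bar>f' a\<bar> * (1 - t) powr s)"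
    if "t \<in> {0..1}" for t
    using s_convex_on_bound_affine[OF assms(4) _ that] assms(1)
    by (simp add: g'_def abs_mult mult.commute)
  moreover have "continuous_on {a..b} f"
    using deriv by (meson DERIV_continuous continuous_at_imp_continuous_on)
  ultimately show ?thesis
    using If_fun_rescale_unit_interval[OF assms(1)] If_fun_unit_interval_abs_le[OF assms(3) _ _ assms(5,6)]
    by metis
qed

theorem mainTheorem2:
  fixes I :: "real set" and f f' :: "real \<Rightarrow> real" and a b \<alpha> lam s :: real
  assumes "is_interval I"
    and "\<And>x. x \<in> interior I \<Longrightarrow> (f has_real_derivative f' x) (at x)"
    and "a \<in> interior I" and "b \<in> interior I" and "a < b"
    and "f' absolutely_integrable_on {a..b}"
    and "\<alpha> \<in> {0..1}" and "lam \<in> {0..1}"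
    and "s \<in> {0<..1}"
    and "s_convex_on s a b (\<lambda>x. \<bar>f' x\<bar>)"
  shows "(\<alpha> * lam \<le> 1 - \<alpha> \<and> 1 - \<alpha> \<le> 1 - lam * (1 - \<alpha>) \<longrightarrow>
           \<bar>If_fun f lam \<alpha> a b\<bar> \<le> (b - a) *
             ((c1 \<alpha> lam s + c2 (1 - \<alpha>) lam s) * \<bar>f' b\<bar> + (c2 \<alpha> lam s + c1 (1 - \<alpha>) lam s) * \<bar>f' a\<bar>))
       \<and> (\<alpha> * lam \<le> 1 - lam * (1 - \<alpha>) \<and> 1 - lam * (1 - \<alpha>) \<le> 1 - \<alpha> \<longrightarrow>
           \<bar>If_fun f lam \<alpha> a b\<bar> \<le> (b - a) *
             ((c1 \<alpha> lam s + c4 (1 - \<alpha>) lam s) * \<bar>f' b\<bar> + (c2 \<alpha> lam s + c3 (1 - \<alpha>) lam s) * \<bar>f' a\<bar>))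
       \<and> (1 - \<alpha> \<le> \<alpha> * lam \<and> \<alpha> * lam \<le> 1 - lam * (1 - \<alpha>) \<longrightarrow>
           \<bar>If_fun f lam \<alpha> a b\<bar> \<le> (b - a) *
             ((c3 \<alpha> lam s + c2 (1 - \<alpha>) lam s) * \<bar>f' b\<bar> + (c4 \<alpha> lam s + c1 (1 - \<alpha>) lam s) * \<bar>f' a\<bar>))"
proof -
  have s: "-1 < s"
    using assms(9) by simp
  have "{a..b} \<subseteq> interior I"
    using assms(1,3,4,5) convex_interior[OF is_interval_convex] closed_segment_subset
    by (metis closed_segment_eq_real_ivl less_imp_le)
  then have deriv: "\<forall>x\<in>{a..b}. (f has_real_derivative f' x) (at x)"
    using assms(2) by blast
  note bound = If_fun_abs_le_kernel_integrals[OF assms(5) deriv assms(7,10)]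
  show ?thesis
    using bound[OF left_kernel_has_integral_c1_c2[OF s assms(7,8)]
                   right_kernel_has_integral_c2_c1[OF s assms(7,8)]]
      bound[OF left_kernel_has_integral_c1_c2[OF s assms(7,8)]
               right_kernel_has_integral_c4_c3[OF s assms(7)]]
      bound[OF left_kernel_has_integral_c3_c4[OF s assms(7)]
               right_kernel_has_integral_c2_c1[OF s assms(7,8)]]
    by (auto simp: algebra_simps)
qed

end
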